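(* Let $G$ be a metabelian group and $g\in G$. Then every right Engel sink of $g^{-1}$ is a left Engel sink of $g$. In particular, if $g^{-1}$ has a finite (minimal) right Engel sink $\mathscr R(g^{-1})$, then $g$ has a finite left Engel sink and $\mathscr E(g)\subseteq\mathscr R(g^{-1})$.
   Context: Commutators: $a^b=b^{-1}ab$, $[a,b]=a^{-1}b^{-1}ab$, and $[a,{}_nb]=[\dots[[a,b],b],\dots,b]$ with $b$ repeated $n$ times. A right Engel sink of $g\in G$ is a set $\mathscr R\subseteq G$ such that for every $x\in G$ there is a positive integer $r(x)$ with $[g,{}_nx]\in\mathscr R$ for all $n\ge r(x)$; a left Engel sink of $g$ is a set $\mathscr E\subseteq G$ such that for every $x\in G$ there is a positive integer $l(x)$ with $[x,{}_ng]\in\mathscr E$ for all $n\ge l(x)$. When finite sinks exist, the intersection of all finite right (resp. left) Engel sinks of $g$ is again one; these minimal sinks are denoted $\mathscr R(g)$ and $\mathscr E(g)$. A group is metabelian if its derived subgroup is abelian. *)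

theory Defs
  imports "HOL-Algebra.Algebra"
begin

definition gcomm :: "('a, 'b) monoid_scheme \<Rightarrow> 'a \<Rightarrow> 'a \<Rightarrow> 'a" where
  "gcomm G a b = inv\<^bsub>G\<^esub> a \<otimes>\<^bsub>G\<^esub> inv\<^bsub>G\<^esub> b \<otimes>\<^bsub>G\<^esub> a \<otimes>\<^bsub>G\<^esub> b"

primrec engel_comm :: "('a, 'b) monoid_scheme \<Rightarrow> 'a \<Rightarrow> nat \<Rightarrow> 'a \<Rightarrow> 'a" where
  "engel_comm G a 0 b = a"
| "engel_comm G a (Suc n) b = gcomm G (engel_comm G a n b) b"

definition metabelian :: "('a, 'b) monoid_scheme \<Rightarrow> bool" where
  "metabelian G \<longleftrightarrow>
     (\<forall>x \<in> derived G (carrier G). \<forall>y \<in> derived G (carrier G). x \<otimes>\<^bsub>G\<^esub> y = y \<otimes>\<^bsub>G\<^esub> x)"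

definition right_engel_sink :: "('a, 'b) monoid_scheme \<Rightarrow> 'a \<Rightarrow> 'a set \<Rightarrow> bool" where
  "right_engel_sink G g R \<longleftrightarrow> R \<subseteq> carrier G \<and>
     (\<forall>x \<in> carrier G. \<exists>r > 0. \<forall>n \<ge> r. engel_comm G g n x \<in> R)"

definition left_engel_sink :: "('a, 'b) monoid_scheme \<Rightarrow> 'a \<Rightarrow> 'a set \<Rightarrow> bool" where
  "left_engel_sink G g E \<longleftrightarrow> E \<subseteq> carrier G \<and>
     (\<forall>x \<in> carrier G. \<exists>l > 0. \<forall>n \<ge> l. engel_comm G x n g \<in> E)"

text \<open>Minimal sinks: intersection of all finite sinks (meaningful when one exists).\<close>
definition min_right_sink :: "('a, 'b) monoid_scheme \<Rightarrow> 'a \<Rightarrow> 'a set" where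
  "min_right_sink G g = \<Inter> {R. finite R \<and> right_engel_sink G g R}"

definition min_left_sink :: "('a, 'b) monoid_scheme \<Rightarrow> 'a \<Rightarrow> 'a set" where
  "min_left_sink G g = \<Inter> {E. finite E \<and> left_engel_sink G g E}"

end

theory Submission
  imports Defs
begin

text \<open>
  Put \<open>y = [x,g] g\<close>. In every group \<open>[g\<^sup>-\<^sup>1, c g] = [c, g]\<close>, so \<open>[g\<^sup>-\<^sup>1, y] = [x, g, g]\<close>;
  and if \<open>a\<close> commutes with \<open>c\<close> then \<open>[a, c g] = [a, g]\<close>. In a metabelian group all
  commutators lie in the abelian group \<open>G'\<close>, so inductively \<open>[g\<^sup>-\<^sup>1, \<^sub>n y] = [x, \<^sub>n\<^sub>+\<^sub>1 g]\<close>
  for \<open>n \<ge> 1\<close>: the left Engel sequence of \<open>x\<close> along \<open>g\<close> is, up to a shift, the right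
  Engel sequence of \<open>g\<^sup>-\<^sup>1\<close> along \<open>y\<close>, hence eventually lies in every right sink of \<open>g\<^sup>-\<^sup>1\<close>.
\<close>

context group
begin

lemma gcomm_closed [simp]:
  "a \<in> carrier G \<Longrightarrow> b \<in> carrier G \<Longrightarrow> gcomm G a b \<in> carrier G"
  by (simp add: gcomm_def)

lemma engel_comm_closed [simp]:
  "a \<in> carrier G \<Longrightarrow> b \<in> carrier G \<Longrightarrow> engel_comm G a n b \<in> carrier G"
  by (induction n) simp_all

lemma gcomm_in_derived:
  assumes "a \<in> carrier G" "b \<in> carrier G"
  shows "gcomm G a b \<in> derived G (carrier G)"
proof -
  have "gcomm G a b = inv a \<otimes> inv b \<otimes> inv (inv a) \<otimes> inv (inv b)"
    using assms by (simp add: gcomm_def)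
  moreover have "inv a \<otimes> inv b \<otimes> inv (inv a) \<otimes> inv (inv b) \<in> derived_set G (carrier G)"
    using assms by (intro UN_I[of "inv a"] UN_I[of "inv b"]) auto
  ultimately show ?thesis
    unfolding derived_def by (simp add: generate.incl)
qed

lemma gcomm_inv_left_mult_right:
  assumes "c \<in> carrier G" "g \<in> carrier G"
  shows "gcomm G (inv g) (c \<otimes> g) = gcomm G c g"
  using assms by (simp add: gcomm_def inv_mult_group m_assoc flip: m_assoc[of g "inv g"])

lemma gcomm_mult_right_of_commute:
  assumes "a \<in> carrier G" "c \<in> carrier G" "g \<in> carrier G" and "a \<otimes> c = c \<otimes> a"
  shows "gcomm G a (c \<otimes> g) = gcomm G a g"
proof -
  have "a \<otimes> (c \<otimes> g) = c \<otimes> (a \<otimes> g)"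
    using assms by (simp flip: m_assoc)
  with assms show ?thesis
    by (simp add: gcomm_def inv_mult_group m_assoc) (simp flip: m_assoc)
qed

lemma engel_comm_inv_eq_engel_comm_Suc:
  assumes "metabelian G" "x \<in> carrier G" "g \<in> carrier G" "n \<ge> 1"
  shows "engel_comm G (inv g) n (gcomm G x g \<otimes> g) = engel_comm G x (Suc n) g"
  using \<open>n \<ge> 1\<close>
proof (induction n rule: dec_induct)
  case base
  have "gcomm G (inv g) (gcomm G x g \<otimes> g) = gcomm G (gcomm G x g) g"
    using assms by (intro gcomm_inv_left_mult_right) simp_all
  then show ?case
    by (simp only: One_nat_def engel_comm.simps)
next
  case (step n)
  have "engel_comm G x (Suc n) g \<in> derived G (carrier G)"
    using assms by (simp only: engel_comm.simps) (simp add: gcomm_in_derived)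
  moreover have "gcomm G x g \<in> derived G (carrier G)"
    using assms by (simp add: gcomm_in_derived)
  ultimately have commute:
    "engel_comm G x (Suc n) g \<otimes> gcomm G x g = gcomm G x g \<otimes> engel_comm G x (Suc n) g"
    using \<open>metabelian G\<close> unfolding metabelian_def by blast
  have "engel_comm G (inv g) (Suc n) (gcomm G x g \<otimes> g)
      = gcomm G (engel_comm G x (Suc n) g) (gcomm G x g \<otimes> g)"
    by (simp only: engel_comm.simps(2) step.IH)
  also have "\<dots> = gcomm G (engel_comm G x (Suc n) g) g"
    using assms by (intro gcomm_mult_right_of_commute[OF _ _ _ commute]) simp_all
  finally show ?case
    by simp
qed

lemma left_engel_sink_if_right_engel_sink_inv:
  assumes "metabelian G" "g \<in> carrier G" and R: "right_engel_sink G (inv g) R"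
  shows "left_engel_sink G g R"
  unfolding left_engel_sink_def
proof (intro conjI ballI)
  show "R \<subseteq> carrier G"
    using R unfolding right_engel_sink_def by blast
  fix x assume x: "x \<in> carrier G"
  with assms have "gcomm G x g \<otimes> g \<in> carrier G"
    by simp
  with R obtain r where "r > 0"
    and r: "\<forall>n \<ge> r. engel_comm G (inv g) n (gcomm G x g \<otimes> g) \<in> R"
    unfolding right_engel_sink_def by blast
  have "engel_comm G x n g \<in> R" if "n \<ge> Suc r" for n
  proof -
    obtain m where m: "n = Suc m" "m \<ge> r"
      using \<open>n \<ge> Suc r\<close> by (cases n) auto
    with \<open>r > 0\<close> have "engel_comm G x n g = engel_comm G (inv g) m (gcomm G x g \<otimes> g)"
      using engel_comm_inv_eq_engel_comm_Suc[OF assms(1) x assms(2), of m] by simp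
    with r m show ?thesis
      by simp
  qed
  then show "\<exists>l > 0. \<forall>n \<ge> l. engel_comm G x n g \<in> R"
    by blast
qed

end

theorem lemma2p5:
  fixes G (structure) and g :: 'a
  assumes "group G" and "metabelian G" and "g \<in> carrier G"
  shows "(\<forall>R. right_engel_sink G (inv\<^bsub>G\<^esub> g) R \<longrightarrow> left_engel_sink G g R)
    \<and> ((\<exists>R. finite R \<and> right_engel_sink G (inv\<^bsub>G\<^esub> g) R) \<longrightarrow>
         (\<exists>E. finite E \<and> left_engel_sink G g E)
         \<and> min_left_sink G g \<subseteq> min_right_sink G (inv\<^bsub>G\<^esub> g))"
proof -
  have sinks: "left_engel_sink G g R" if "right_engel_sink G (inv g) R" for R
    using group.left_engel_sink_if_right_engel_sink_inv[OF assms that] .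
  then have "{R. finite R \<and> right_engel_sink G (inv g) R} \<subseteq> {E. finite E \<and> left_engel_sink G g E}"
    by blast
  then have "min_left_sink G g \<subseteq> min_right_sink G (inv g)"
    unfolding min_left_sink_def min_right_sink_def by (rule Inter_anti_mono)
  with sinks show ?thesis
    by blast
qed

end
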